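(* For every $n\ge1$ and $s\ge 2$, the homomorphism $\nu_n^s:A_n^s\to A_{n+1}^s$ is injective.
   Context: For $s\ge1$, $A_n^s$ is the group of path components of the space of homotopy self-equivalences of a connected graph $G\simeq\bigvee^nS^1$ fixing $s$ chosen distinct marked points $x_1,\dots,x_s$ pointwise; $A_n^s\cong\mathrm{Aut}(F_n)\ltimes F_n^{\times(s-1)}$ with $\mathrm{Aut}(F_n)$ acting diagonally. The homomorphism $\alpha_n^s:A_n^s\to A_{n+1}^{s-1}$ (for $s\ge2$) is induced by connecting the last marked point $x_s$ to the first marked point $x_1$ by a new edge (which raises the rank to $n+1 $ and leaves $s-1$ marked points), extending self-equivalences by the identity on the new edge. The homomorphism $\mu_{n}^{s}:A_{n}^{s}\to A_{n}^{s+1}$ is induced by attaching a new edge (leg) at a marked point, with its free endpoint as a new marked point, extending by the identity on the leg; under $A_n^s\cong\mathrm{Aut}(F_n)\ltimes F_n^{\times(s-1)}$ it is the standard inclusion $\mathrm{Aut}(F_n)\ltimes F_n^{\times(s-1)}\hookrightarrow\mathrm{Aut}(F_n)\ltimes F_n^{\times s}$. Finally $\nu_n^s:=\mu_{n+1}^{s-1}\circ\alpha_n^s$. *)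

theory Defs
  imports "HOL-Algebra.Group"
begin

text \<open>A letter (i, True) is the generator x_i, (i, False) its inverse.\<close>
type_synonym letter = "nat \<times> bool"
type_synonym word = "letter list"

fun red :: "word \<Rightarrow> word" where
  "red [] = []"
| "red (x # xs) = (case red xs of
      [] \<Rightarrow> [x]
    | y # ys \<Rightarrow> (if fst x = fst y \<and> snd x \<noteq> snd y then ys else x # y # ys))"

definition reduced :: "word \<Rightarrow> bool" where
  "reduced w \<longleftrightarrow> (\<forall>i. Suc i < length w \<longrightarrow>
      \<not> (fst (w ! i) = fst (w ! Suc i) \<and> snd (w ! i) \<noteq> snd (w ! Suc i)))"

definition invw :: "word \<Rightarrow> word" where
  "invw w = rev (map (\<lambda>(i, b). (i, \<not> b)) w)"

definition FG :: "nat \<Rightarrow> word monoid" where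
  "FG n = \<lparr> carrier = {w. reduced w \<and> (\<forall>l \<in> set w. fst l < n)},
            mult = (\<lambda>u v. red (u @ v)),
            one = [] \<rparr>"

definition AutF :: "nat \<Rightarrow> (word \<Rightarrow> word) set" where
  "AutF n = {\<phi>. \<phi> \<in> hom (FG n) (FG n) \<and> bij_betw \<phi> (carrier (FG n)) (carrier (FG n))
                 \<and> \<phi> \<in> extensional (carrier (FG n))}"

text \<open>An element is (phi, [w_2, ..., w_s]); geometrically w_i = gamma_i f(gamma_i)^(-1),
  which gives the product (phi, w)(psi, v) = (phi o psi, w_i phi(v_i)).\<close>
definition A :: "nat \<Rightarrow> nat \<Rightarrow> ((word \<Rightarrow> word) \<times> word list) monoid" where
  "A n s = \<lparr> carrier = {(\<phi>, ws). \<phi> \<in> AutF n \<and> length ws = s - 1 \<and> set ws \<subseteq> carrier (FG n)},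
             mult = (\<lambda>(\<phi>, ws) (\<psi>, vs).
                       (restrict (\<phi> \<circ> \<psi>) (carrier (FG n)),
                        map2 (\<lambda>w v. red (w @ \<phi> v)) ws vs)),
             one = (restrict id (carrier (FG n)), replicate (s - 1) []) \<rparr>"

definition subst_hom :: "(nat \<Rightarrow> word) \<Rightarrow> word \<Rightarrow> word" where
  "subst_hom g w = red (concat (map (\<lambda>(i, b). if b then g i else invw (g i)) w))"

text \<open>alpha_n^s: the new edge e from x_s to x_1 gives the new generator t = x_n
  (the loop gamma_s e), with Phi(t) = w_s^(-1) t; the other marked data are kept.\<close>
definition alpha :: "nat \<Rightarrow> nat \<Rightarrow> ((word \<Rightarrow> word) \<times> word list) \<Rightarrow> ((word \<Rightarrow> word) \<times> word list)" where
  "alpha n s = (\<lambda>(\<phi>, ws).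
     (restrict (subst_hom (\<lambda>i. if i < n then \<phi> [(i, True)] else red (invw (last ws) @ [(n, True)])))
               (carrier (FG (Suc n))),
      butlast ws))"

definition mu :: "nat \<Rightarrow> nat \<Rightarrow> ((word \<Rightarrow> word) \<times> word list) \<Rightarrow> ((word \<Rightarrow> word) \<times> word list)" where
  "mu n s = (\<lambda>(\<phi>, ws). (\<phi>, ws @ [[]]))"

definition nu :: "nat \<Rightarrow> nat \<Rightarrow> ((word \<Rightarrow> word) \<times> word list) \<Rightarrow> ((word \<Rightarrow> word) \<times> word list)" where
  "nu n s = mu (Suc n) (s - 1) \<circ> alpha n s"

end

theory Submission
  imports Defs
begin

text \<open>An element (\<phi>, ws) of A n s is recovered from its image under alpha: \<phi> from the
  images of the old generators x_0, ..., x_(n-1), the last word w_s from the image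
  (w_s)^(-1) t of the new generator t = x_n, which is already reduced since t does not occur
  in w_s, and the remaining words from the second component. Hence alpha is injective, and
  so is nu, because mu only appends a trivial coordinate.\<close>

definition cancels :: "letter \<Rightarrow> letter \<Rightarrow> bool" where
  "cancels x y \<longleftrightarrow> fst x = fst y \<and> snd x \<noteq> snd y"

definition push_letter :: "letter \<Rightarrow> word \<Rightarrow> word" where
  "push_letter x r = (case r of [] \<Rightarrow> [x] | y # ys \<Rightarrow> (if cancels x y then ys else x # y # ys))"

lemma red_Cons_push_letter: "red (x # xs) = push_letter x (red xs)"
  by (simp add: push_letter_def cancels_def split: list.split)

declare red.simps(2)[simp del]

lemma reduced_Nil[simp]: "reduced []"
  by (simp add: reduced_def)

lemma reduced_Cons: "reduced (x # xs) \<longleftrightarrow> reduced xs \<and> (xs = [] \<or> \<not> cancels x (hd xs))"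
proof
  assume r: "reduced (x # xs)"
  have "reduced xs" unfolding reduced_def
  proof (intro allI impI)
    fix i assume "Suc i < length xs"
    then show "\<not> (fst (xs ! i) = fst (xs ! Suc i) \<and> snd (xs ! i) \<noteq> snd (xs ! Suc i))"
      using r[unfolded reduced_def, rule_format, of "Suc i"] by simp
  qed
  moreover have "xs = [] \<or> \<not> cancels x (hd xs)"
    using r[unfolded reduced_def, rule_format, of 0] by (cases xs) (auto simp: cancels_def)
  ultimately show "reduced xs \<and> (xs = [] \<or> \<not> cancels x (hd xs))" by blast
next
  assume h: "reduced xs \<and> (xs = [] \<or> \<not> cancels x (hd xs))"
  show "reduced (x # xs)" unfolding reduced_def
  proof (intro allI impI)
    fix i assume i: "Suc i < length (x # xs)"
    show "\<not> (fst ((x#xs) ! i) = fst ((x#xs) ! Suc i) \<and> snd ((x#xs) ! i) \<noteq> snd ((x#xs) ! Suc i))"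
    proof (cases i)
      case 0 then show ?thesis using h i by (cases xs) (auto simp: cancels_def)
    next
      case (Suc j) then show ?thesis using h i unfolding reduced_def by auto
    qed
  qed
qed

lemma reduced_snoc: "reduced (xs @ [z]) \<longleftrightarrow> reduced xs \<and> (xs = [] \<or> \<not> cancels (last xs) z)"
  by (induction xs) (auto simp: reduced_Cons split: if_splits)

lemma reduced_push_letter: "reduced r \<Longrightarrow> reduced (push_letter x r)"
  by (cases r) (auto simp: push_letter_def reduced_Cons)

lemma reduced_red: "reduced (red w)"
  by (induction w) (auto simp: red_Cons_push_letter reduced_push_letter)

lemma red_of_reduced: "reduced w \<Longrightarrow> red w = w"
proof (induction w)
  case (Cons x xs)
  then have "red xs = xs" by (simp add: reduced_Cons)
  then show ?case
    using Cons.prems by (cases xs) (auto simp: red_Cons_push_letter push_letter_def reduced_Cons)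
qed simp

lemma set_red: "set (red w) \<subseteq> set w"
proof (induction w)
  case (Cons x xs)
  have "set (push_letter x r) \<subseteq> insert x (set r)" for r
    by (cases r) (auto simp: push_letter_def)
  then show ?case using Cons by (auto simp: red_Cons_push_letter)
qed simp

lemma push_letter_cancel: "reduced z \<Longrightarrow> cancels x y \<Longrightarrow> push_letter x (push_letter y z) = z"
proof (cases z)
  case Nil
  assume "cancels x y" then show ?thesis using Nil by (simp add: push_letter_def cancels_def)
next
  case (Cons a zs)
  assume r: "reduced z" and c: "cancels x y"
  show ?thesis
  proof (cases "cancels y a")
    case True
    then have "a = x" using c by (cases a; cases x; cases y) (auto simp: cancels_def)
    then show ?thesis using r Cons True by (cases zs) (auto simp: push_letter_def reduced_Cons)
  next
    case False then show ?thesis using Cons c by (simp add: push_letter_def)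
  qed
qed

lemma red_append_red: "red (xs @ red ys) = red (xs @ ys)"
  by (induction xs) (auto simp: red_Cons_push_letter red_of_reduced reduced_red)

lemma red_push_letter_append:
  assumes "reduced v" shows "red (push_letter x v @ r) = push_letter x (red (v @ r))"
proof (cases v)
  case Nil then show ?thesis by (simp add: push_letter_def red_Cons_push_letter)
next
  case (Cons y ys)
  show ?thesis
  proof (cases "cancels x y")
    case True
    have "push_letter x (red (v @ r)) = push_letter x (push_letter y (red (ys @ r)))"
      using Cons by (simp add: red_Cons_push_letter)
    also have "\<dots> = red (ys @ r)" using push_letter_cancel[OF reduced_red True] .
    finally show ?thesis using Cons True by (simp add: push_letter_def)
  next
    case False
    then show ?thesis using Cons by (simp add: push_letter_def red_Cons_push_letter)
  qed
qed

lemma red_red_append: "red (red xs @ ys) = red (xs @ ys)"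
proof (induction xs)
  case (Cons x xs)
  have "red (red (x # xs) @ ys) = red (push_letter x (red xs) @ ys)"
    by (simp add: red_Cons_push_letter)
  also have "\<dots> = push_letter x (red (red xs @ ys))"
    using red_push_letter_append[OF reduced_red] .
  also have "\<dots> = red ((x # xs) @ ys)" using Cons by (simp add: red_Cons_push_letter)
  finally show ?case .
qed simp

lemma invw_Cons: "invw (x # xs) = invw xs @ [(fst x, \<not> snd x)]"
  by (cases x) (simp add: invw_def)

lemma invw_invw[simp]: "invw (invw w) = w"
  by (induction w) (auto simp: invw_def rev_map)

lemma set_invw: "set (invw w) = (\<lambda>(i, b). (i, \<not> b)) ` set w"
  by (simp add: invw_def)

lemma red_invw_append: "red (invw w @ w) = []"
proof (induction w)
  case (Cons x w)
  have c: "cancels (fst x, \<not> snd x) x" by (simp add: cancels_def)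
  have "red (invw (x # w) @ x # w) = red (invw w @ red ((fst x, \<not> snd x) # x # w))"
    by (simp add: invw_Cons red_append_red)
  also have "red ((fst x, \<not> snd x) # x # w) = red w"
    using push_letter_cancel[OF reduced_red c] by (simp add: red_Cons_push_letter)
  finally show ?case using Cons by (simp add: red_append_red)
qed (simp add: invw_def)

lemma reduced_invw: "reduced w \<Longrightarrow> reduced (invw w)"
proof (induction w)
  case (Cons x xs)
  then have "reduced xs" by (simp add: reduced_Cons)
  moreover have "xs \<noteq> [] \<Longrightarrow> \<not> cancels (last (invw xs)) (fst x, \<not> snd x)"
    using Cons.prems by (cases xs) (auto simp: reduced_Cons invw_Cons cancels_def)
  moreover have "invw xs = [] \<longleftrightarrow> xs = []" by (simp add: invw_def)
  ultimately show ?case using Cons.IH unfolding invw_Cons reduced_snoc by blast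
qed (simp add: invw_def)

lemma group_FG: "group (FG n)"
proof (rule groupI)
  fix x y assume "x \<in> carrier (FG n)" "y \<in> carrier (FG n)"
  then show "x \<otimes>\<^bsub>FG n\<^esub> y \<in> carrier (FG n)"
    using set_red[of "x @ y"] by (auto simp: FG_def reduced_red)
next
  show "\<one>\<^bsub>FG n\<^esub> \<in> carrier (FG n)" by (simp add: FG_def)
next
  fix x y z
  show "x \<otimes>\<^bsub>FG n\<^esub> y \<otimes>\<^bsub>FG n\<^esub> z = x \<otimes>\<^bsub>FG n\<^esub> (y \<otimes>\<^bsub>FG n\<^esub> z)"
    by (simp add: FG_def red_red_append red_append_red)
next
  fix x assume "x \<in> carrier (FG n)"
  then show "\<one>\<^bsub>FG n\<^esub> \<otimes>\<^bsub>FG n\<^esub> x = x" by (simp add: FG_def red_of_reduced)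
next
  fix x assume x: "x \<in> carrier (FG n)"
  show "\<exists>y\<in>carrier (FG n). y \<otimes>\<^bsub>FG n\<^esub> x = \<one>\<^bsub>FG n\<^esub>"
  proof
    show "invw x \<otimes>\<^bsub>FG n\<^esub> x = \<one>\<^bsub>FG n\<^esub>" by (simp add: FG_def red_invw_append)
    show "invw x \<in> carrier (FG n)" using x by (auto simp: FG_def reduced_invw set_invw)
  qed
qed

lemma generator_in_FG: "i < n \<Longrightarrow> [(i, b)] \<in> carrier (FG n)"
  by (simp add: FG_def reduced_def)

lemma AutF_eqI:
  assumes \<phi>: "\<phi> \<in> AutF n" and \<psi>: "\<psi> \<in> AutF n"
    and gen: "\<And>i. i < n \<Longrightarrow> \<phi> [(i, True)] = \<psi> [(i, True)]"
  shows "\<phi> = \<psi>"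
proof -
  interpret G: group "FG n" by (rule group_FG)
  interpret P: group_hom "FG n" "FG n" \<phi>
    using \<phi> by (simp add: AutF_def group_hom_def group_hom_axioms_def group_FG)
  interpret Q: group_hom "FG n" "FG n" \<psi>
    using \<psi> by (simp add: AutF_def group_hom_def group_hom_axioms_def group_FG)
  have letter: "\<phi> [(i, b)] = \<psi> [(i, b)]" if i: "i < n" for i b
  proof (cases b)
    case False
    have "inv\<^bsub>FG n\<^esub> [(i, True)] = [(i, False)]"
      by (rule G.inv_equality) (use i in \<open>auto simp: FG_def reduced_def red.simps\<close>)
    then show ?thesis
      using False P.hom_inv Q.hom_inv generator_in_FG[OF i] gen[OF i] by metis
  qed (use gen[OF i] in simp)
  have "\<phi> w = \<psi> w" if "w \<in> carrier (FG n)" for w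
    using that
  proof (induction w)
    case Nil
    show ?case using P.hom_one Q.hom_one by (simp add: FG_def)
  next
    case (Cons x w)
    then have w: "w \<in> carrier (FG n)" and x: "[x] \<in> carrier (FG n)" and "fst x < n"
      by (auto simp: FG_def reduced_Cons reduced_def)
    have "x # w = [x] \<otimes>\<^bsub>FG n\<^esub> w" using Cons.prems by (simp add: FG_def red_of_reduced)
    then show ?case
      using P.hom_mult[OF x w] Q.hom_mult[OF x w] letter[OF \<open>fst x < n\<close>, of "snd x"] Cons.IH[OF w]
      by simp
  qed
  moreover have "\<phi> \<in> extensional (carrier (FG n))" "\<psi> \<in> extensional (carrier (FG n))"
    using \<phi> \<psi> by (simp_all add: AutF_def)
  ultimately show ?thesis by (intro extensionalityI[of _ "carrier (FG n)"])
qed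

lemma AutF_in_FG: "\<phi> \<in> AutF n \<Longrightarrow> w \<in> carrier (FG n) \<Longrightarrow> \<phi> w \<in> carrier (FG n)"
  unfolding AutF_def by (auto dest: bij_betwE)

lemma subst_hom_generator: "subst_hom g [(i, True)] = red (g i)"
  by (simp add: subst_hom_def)

lemma fst_alpha_old_generator:
  assumes "(\<phi>, ws) \<in> carrier (A n s)" and "i < n"
  shows "fst (alpha n s (\<phi>, ws)) [(i, True)] = \<phi> [(i, True)]"
proof -
  have "\<phi> [(i, True)] \<in> carrier (FG n)"
    using assms by (auto simp: A_def intro: AutF_in_FG generator_in_FG)
  then show ?thesis
    using assms(2)
    by (simp add: alpha_def generator_in_FG[of _ "Suc n"] subst_hom_generator red_of_reduced FG_def
        reduced_def)
qed

lemma fst_alpha_new_generator: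
  assumes "(\<phi>, ws) \<in> carrier (A n s)" and "ws \<noteq> []"
  shows "fst (alpha n s (\<phi>, ws)) [(n, True)] = invw (last ws) @ [(n, True)]"
proof -
  have "last ws \<in> carrier (FG n)" using assms by (auto simp: A_def)
  then have "reduced (invw (last ws))" and "\<forall>l \<in> set (invw (last ws)). fst l < n"
    by (auto simp: FG_def reduced_invw set_invw)
  then have "reduced (invw (last ws) @ [(n, True)])"
    by (auto simp: reduced_snoc cancels_def dest: last_in_set)
  then show ?thesis
    by (simp add: alpha_def generator_in_FG subst_hom_generator red_of_reduced)
qed

lemma inj_on_alpha: "inj_on (alpha n s) (carrier (A n s))"
proof (rule inj_onI)
  fix a b assume a: "a \<in> carrier (A n s)" and b: "b \<in> carrier (A n s)"
    and eq: "alpha n s a = alpha n s b"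
  obtain \<phi> ws \<psi> vs where ab: "a = (\<phi>, ws)" "b = (\<psi>, vs)" by (cases a, cases b)
  have \<phi>: "\<phi> \<in> AutF n" and \<psi>: "\<psi> \<in> AutF n" and len: "length ws = length vs"
    using a b ab by (auto simp: A_def)
  have "\<phi> = \<psi>"
    using AutF_eqI[OF \<phi> \<psi>] fst_alpha_old_generator a b eq ab by metis
  moreover have "ws = vs"
  proof (cases "ws = []")
    case False
    with len have "vs \<noteq> []" by auto
    then have "invw (last ws) @ [(n, True)] = invw (last vs) @ [(n, True)]"
      using fst_alpha_new_generator a b eq ab \<open>ws \<noteq> []\<close> by metis
    then have "last ws = last vs" by (metis butlast_snoc invw_invw)
    moreover have "butlast ws = butlast vs" using eq ab by (simp add: alpha_def)
    ultimately show ?thesis using \<open>ws \<noteq> []\<close> \<open>vs \<noteq> []\<close> by (metis append_butlast_last_id)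
  qed (use len in simp)
  ultimately show "a = b" using ab by simp
qed

lemma inj_mu: "inj (mu n s)"
  by (rule injI) (auto simp: mu_def split: prod.splits)

theorem mainTheorem8:
  fixes n s :: nat
  assumes "n \<ge> 1" and "s \<ge> 2"
  shows "inj_on (nu n s) (carrier (A n s))"
  unfolding nu_def
  by (rule comp_inj_on[OF inj_on_alpha inj_on_subset[OF inj_mu subset_UNIV]])

end
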